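(* Fix $J=(J_1,J_2)\in\mathbb{R}^2$ and let $S(J)=\{m\in\{1,2,3,4\}: U_m(J)=\min\{U_1(J),U_2(J),U_3(J),U_4(J)\}\}$ and $\mathcal{C}_{S(J)}=\bigcup_{m\in S(J)}\mathcal{C}_m$. Suppose that for every unit ball $b$, every configuration $\sigma_b$ on $b$ belonging to $\mathcal{C}_{S(J)}$, and every unit ball $b'$ neighbouring $b$, there exists exactly one configuration $\sigma'_{b'}$ on $b'$ belonging to $\mathcal{C}_{S(J)}$ that is compatible with $\sigma_b$. Then the relative Hamiltonian $H$ satisfies the Peierls condition.
   Context: Let $G_2$ be the free product of three cyclic groups of order two with generators $a_1,a_2,a_3$; its elements are the vertices $V$ of the Cayley tree $\Gamma^2$ of order 2, where $g,h$ are nearest neighbours (an edge $\langle g,h\rangle$) iff $h=ga_i$ for some $i$; every vertex has 3 neighbours. $d$ is the graph distance. Configurations are maps $\sigma:V\to\{-1,1\}$. A configuration is periodic if there is a subgroup $G^*\subset G_2$ of finite index with $\sigma(gh)=\sigma(h)$ for all $g\in G^*$, $h\in G_2$; it has period not exceeding 2 if such a subgroup of index at most 2 exists. A unit ball is $b=\{y: d(x,y)\le1\}$ for some $x\in V$ (its center $x$ and three leaves); $M$ is the set of unit balls, and $\sigma_b$ is the restriction of $\sigma$ to $b$. Two distinct unit balls are neighbours if they have a common edge; configurations $\sigma_b$, $\sigma'_{b'}$ on neighbouring balls are compatible if they coincide on the endpoints of the common edge. Classes: a configuration on a unit ball belongs to $\mathcal{C}_1$, $\mathcal{C}_2$, $\mathcal{C}_4$,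 $\mathcal{C}_3$ according as exactly $3$, $2$, $1$, $0$ of its leaves carry the same value as its center. The energy of a ball is $U(\sigma_b)=\tfrac12J_1\sum_{\langle x,y\rangle:\,x,y\in b}\sigma(x)\sigma(y)+J_2\sum_{\{x,y\}\subset b:\,d(x,y)=2}\sigma(x)\sigma(y)$ (sums over unordered pairs); it equals $U_1=\tfrac32J_1+3J_2$, $U_2=\tfrac12J_1-J_2$, $U_3=-\tfrac32J_1+3J_2$, $U_4=-\tfrac12J_1-J_2$ on $\mathcal{C}_1,\dots,\mathcal{C}_4$ respectively. For $\sigma,\varphi$ differing at finitely many vertices, the relative Hamiltonian is $H(\sigma,\varphi)=J_1\sum_{\langle x,y\rangle}(\sigma(x)\sigma(y)-\varphi(x)\varphi(y))+J_2\sum_{\{x,y\}:\,d(x,y)=2}(\sigma(x)\sigma(y)-\varphi(x)\varphi(y))$ (unordered pairs). A ground state is a periodic configuration $a$ with $U(a_b)=\min\{U_1,U_2,U_3,U_4\}$ for every $b\in M$. For $x\in V$ let $V_2(x)=\{y: d(x,y)\le2\}$. If the set of all ground states is finite, $\{\sigma^1,\dots,\sigma^q\}$, and each has period not exceeding 2, then for a configuration $\sigma$ the ball $V_2(x)$ is improper if $\sigma|_{V_2(x)}\ne\sigma^j|_{V_2(x)}$ for all $j=1,\dots,q$; the boundary $\partial(\sigma)$ is the union of the improper balls of $\sigma$, and $|\partial(\sigma)|$ is the number of unit balls in $\partial(\sigma)$. $H$ satisfies the Peierls condition if the set of ground states is finite, $\{\sigma^1,\dots,\sigma^q\}$, each of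 period not exceeding 2, and there is a constant $\lambda>0$ such that for every $j$ and every configuration $\sigma$ coinciding with $\sigma^j$ at all but finitely many vertices, $H(\sigma,\sigma^j)\ge\lambda|\partial(\sigma)|$. *)

theory Defs
  imports Complex_Main "HOL-Algebra.Coset"
begin

section \<open>The group G_2: free product of three copies of Z/2\<close>

text \<open>Elements are reduced words over the letters 0,1,2 (letter i stands for a_(i+1)):
  no two consecutive letters are equal.\<close>

definition reduced :: "nat list \<Rightarrow> bool" where
  "reduced w \<longleftrightarrow> set w \<subseteq> {0,1,2} \<and> (\<forall>i. Suc i < length w \<longrightarrow> w ! i \<noteq> w ! Suc i)"

typedef G2 = "{w :: nat list. reduced w}"
  by (rule exI[of _ "[]"]) (simp add: reduced_def)

fun red_app :: "nat list \<Rightarrow> nat list \<Rightarrow> nat list" where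
  "red_app u [] = u"
| "red_app u (a # v) =
     (if u \<noteq> [] \<and> last u = a then red_app (butlast u) v else red_app (u @ [a]) v)"

definition g2_mult :: "G2 \<Rightarrow> G2 \<Rightarrow> G2" where
  "g2_mult x y = Abs_G2 (red_app (Rep_G2 x) (Rep_G2 y))"

definition g2_one :: G2 where
  "g2_one = Abs_G2 []"

definition gen :: "nat \<Rightarrow> G2" where
  "gen i = Abs_G2 [i]"

definition G2grp :: "G2 monoid" where
  "G2grp = \<lparr>carrier = UNIV, mult = g2_mult, one = g2_one\<rparr>"

section \<open>Cayley tree of order 2\<close>

definition adj :: "G2 \<Rightarrow> G2 \<Rightarrow> bool" where
  "adj g h \<longleftrightarrow> (\<exists>i<3. h = g2_mult g (gen i))"

definition gdist :: "G2 \<Rightarrow> G2 \<Rightarrow> nat" where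
  "gdist x y = (LEAST n. (adj ^^ n) x y)"

definition ball1 :: "G2 \<Rightarrow> G2 set" where
  "ball1 x = {y. gdist x y \<le> 1}"

definition ball2 :: "G2 \<Rightarrow> G2 set" where
  "ball2 x = {y. gdist x y \<le> 2}"

definition is_config :: "(G2 \<Rightarrow> int) \<Rightarrow> bool" where
  "is_config \<sigma> \<longleftrightarrow> (\<forall>x. \<sigma> x \<in> {-1, 1})"

definition confs_on :: "G2 set \<Rightarrow> (G2 \<Rightarrow> int) set" where
  "confs_on b = {f. (\<forall>u\<in>b. f u \<in> {-1, 1}) \<and> (\<forall>u. u \<notin> b \<longrightarrow> f u = 0)}"

definition periodic_idx :: "nat option \<Rightarrow> (G2 \<Rightarrow> int) \<Rightarrow> bool" where
  "periodic_idx bnd \<sigma> \<longleftrightarrow>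
     (\<exists>H. subgroup H G2grp \<and> finite (rcosets\<^bsub>G2grp\<^esub> H)
          \<and> (case bnd of None \<Rightarrow> True | Some k \<Rightarrow> card (rcosets\<^bsub>G2grp\<^esub> H) \<le> k)
          \<and> (\<forall>g\<in>H. \<forall>h. \<sigma> (g2_mult g h) = \<sigma> h))"

definition periodic :: "(G2 \<Rightarrow> int) \<Rightarrow> bool" where
  "periodic \<sigma> \<longleftrightarrow> periodic_idx None \<sigma>"

definition period_le2 :: "(G2 \<Rightarrow> int) \<Rightarrow> bool" where
  "period_le2 \<sigma> \<longleftrightarrow> periodic_idx (Some 2) \<sigma>"

definition same_leaves :: "G2 \<Rightarrow> (G2 \<Rightarrow> int) \<Rightarrow> nat" where
  "same_leaves x f = card {u \<in> ball1 x - {x}. f u = f x}"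

text \<open>class index m such that f restricted to ball1 x lies in C_m\<close>
definition ball_class :: "G2 \<Rightarrow> (G2 \<Rightarrow> int) \<Rightarrow> nat" where
  "ball_class x f = (if same_leaves x f = 3 then 1
     else if same_leaves x f = 2 then 2
     else if same_leaves x f = 1 then 4 else 3)"

definition ball_energy :: "real \<Rightarrow> real \<Rightarrow> (G2 \<Rightarrow> int) \<Rightarrow> G2 \<Rightarrow> real" where
  "ball_energy J1 J2 \<sigma> x =
     J1 / 2 * ((1/2) * (\<Sum>p\<in>{(u,v). u \<in> ball1 x \<and> v \<in> ball1 x \<and> adj u v}.
                           of_int (\<sigma> (fst p) * \<sigma> (snd p))))
   + J2 * ((1/2) * (\<Sum>p\<in>{(u,v). u \<in> ball1 x \<and> v \<in> ball1 x \<and> gdist u v = 2}.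
                           of_int (\<sigma> (fst p) * \<sigma> (snd p))))"

definition Uval :: "real \<Rightarrow> real \<Rightarrow> nat \<Rightarrow> real" where
  "Uval J1 J2 m = (if m = 1 then 3/2 * J1 + 3 * J2
                   else if m = 2 then 1/2 * J1 - J2
                   else if m = 3 then -3/2 * J1 + 3 * J2
                   else -1/2 * J1 - J2)"

definition Umin :: "real \<Rightarrow> real \<Rightarrow> real" where
  "Umin J1 J2 = Min (Uval J1 J2 ` {1,2,3,4})"

definition Sset :: "real \<Rightarrow> real \<Rightarrow> nat set" where
  "Sset J1 J2 = {m \<in> {1,2,3,4}. Uval J1 J2 m = Umin J1 J2}"

text \<open>relative Hamiltonian; sums over unordered pairs written as half the sums over
  ordered pairs, restricted to the (finitely many) pairs with non-zero contribution\<close>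
definition relH :: "real \<Rightarrow> real \<Rightarrow> (G2 \<Rightarrow> int) \<Rightarrow> (G2 \<Rightarrow> int) \<Rightarrow> real" where
  "relH J1 J2 \<sigma> \<phi> =
     J1 * ((1/2) * (\<Sum>p\<in>{(x,y). adj x y \<and> \<sigma> x * \<sigma> y \<noteq> \<phi> x * \<phi> y}.
                 of_int (\<sigma> (fst p) * \<sigma> (snd p) - \<phi> (fst p) * \<phi> (snd p))))
   + J2 * ((1/2) * (\<Sum>p\<in>{(x,y). gdist x y = 2 \<and> \<sigma> x * \<sigma> y \<noteq> \<phi> x * \<phi> y}.
                 of_int (\<sigma> (fst p) * \<sigma> (snd p) - \<phi> (fst p) * \<phi> (snd p))))"

definition ground_state :: "real \<Rightarrow> real \<Rightarrow> (G2 \<Rightarrow> int) \<Rightarrow> bool" where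
  "ground_state J1 J2 a \<longleftrightarrow> is_config a \<and> periodic a \<and>
     (\<forall>x. ball_energy J1 J2 a x = Umin J1 J2)"

definition GS :: "real \<Rightarrow> real \<Rightarrow> (G2 \<Rightarrow> int) set" where
  "GS J1 J2 = {a. ground_state J1 J2 a}"

definition improper :: "real \<Rightarrow> real \<Rightarrow> (G2 \<Rightarrow> int) \<Rightarrow> G2 \<Rightarrow> bool" where
  "improper J1 J2 \<sigma> x \<longleftrightarrow> (\<forall>\<tau>\<in>GS J1 J2. \<not> (\<forall>y\<in>ball2 x. \<sigma> y = \<tau> y))"

definition boundary :: "real \<Rightarrow> real \<Rightarrow> (G2 \<Rightarrow> int) \<Rightarrow> G2 set" where
  "boundary J1 J2 \<sigma> = \<Union> {ball2 x | x. improper J1 J2 \<sigma> x}"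

definition boundary_size :: "real \<Rightarrow> real \<Rightarrow> (G2 \<Rightarrow> int) \<Rightarrow> nat" where
  "boundary_size J1 J2 \<sigma> = card {x. ball1 x \<subseteq> boundary J1 J2 \<sigma>}"

definition peierls :: "real \<Rightarrow> real \<Rightarrow> bool" where
  "peierls J1 J2 \<longleftrightarrow> finite (GS J1 J2) \<and> (\<forall>\<tau>\<in>GS J1 J2. period_le2 \<tau>) \<and>
     (\<exists>lam>0. \<forall>\<tau>\<in>GS J1 J2. \<forall>\<sigma>. is_config \<sigma> \<and> finite {x. \<sigma> x \<noteq> \<tau> x} \<longrightarrow>
        relH J1 J2 \<sigma> \<tau> \<ge> lam * real (boundary_size J1 J2 \<sigma>))"

definition nbr_balls :: "G2 set \<Rightarrow> G2 set \<Rightarrow> bool" where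
  "nbr_balls b b' \<longleftrightarrow> b \<noteq> b' \<and> (\<exists>u v. u \<in> b \<and> v \<in> b \<and> u \<in> b' \<and> v \<in> b' \<and> adj u v)"

definition compatible :: "G2 set \<Rightarrow> G2 set \<Rightarrow> (G2 \<Rightarrow> int) \<Rightarrow> (G2 \<Rightarrow> int) \<Rightarrow> bool" where
  "compatible b b' f g \<longleftrightarrow>
     (\<forall>u v. u \<in> b \<and> v \<in> b \<and> u \<in> b' \<and> v \<in> b' \<and> adj u v \<longrightarrow> f u = g u \<and> f v = g v)"

end

theory Submission
  imports Defs
begin

text \<open>
  If the class \<open>\<C>\<^sub>2\<close> or \<open>\<C>\<^sub>4\<close> were minimal, a ball of that class would have two
  compatible extensions of the same class to a neighbouring ball (swap the values on the two
  new leaves); so the uniqueness hypothesis forces \<open>S(J) \<subseteq> {1, 3}\<close>. Balls of classes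
  \<open>\<C>\<^sub>1\<close> and \<open>\<C>\<^sub>3\<close> cannot be centred at adjacent vertices, hence every ground state is one of
  the configurations \<open>x \<mapsto> c \<epsilon>\<^sup>|\<^sup>x\<^sup>|\<close> with \<open>c, \<epsilon> = \<plusminus>1\<close>, which are invariant under the
  subgroup of words of even length, and \<open>V\<^sub>2(x)\<close> is proper as soon as all unit balls centred in
  \<open>b(x)\<close> have minimal energy. The relative Hamiltonian is the sum over centres of
  \<open>U(\<sigma>\<^sub>b) - U\<^sub>m\<^sub>i\<^sub>n\<close>: each non-minimal ball contributes at least the energy gap
  \<open>\<delta> > 0\<close>, and each point of the boundary lies within distance 3 of a non-minimal ball,
  so \<open>H(\<sigma>, \<sigma>\<^sup>j) \<ge> \<delta> |\<partial>(\<sigma>)| / |B\<^sub>3|\<close>.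
\<close>

definition red_snoc :: "nat list \<Rightarrow> nat \<Rightarrow> nat list" where
  "red_snoc u a = (if u \<noteq> [] \<and> last u = a then butlast u else u @ [a])"

lemma red_app_Cons: "red_app u (a # v) = red_app (red_snoc u a) v"
  by (simp add: red_snoc_def)

declare red_app.simps(2)[simp del]

lemma red_app_append: "red_app u (v @ w) = red_app (red_app u v) w"
  by (induction v arbitrary: u) (auto simp: red_app_Cons)

lemma red_app_snoc: "red_app u (v @ [a]) = red_snoc (red_app u v) a"
  by (simp add: red_app_append red_app_Cons)

lemma reduced_iff_successively: "reduced w \<longleftrightarrow> set w \<subseteq> {0,1,2} \<and> successively (\<noteq>) w"
  by (simp add: reduced_def successively_conv_nth)

lemma reduced_Nil [simp]: "reduced []"
  by (simp add: reduced_iff_successively)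

lemma reduced_snoc:
  "reduced (u @ [a]) \<longleftrightarrow> reduced u \<and> a \<in> {0,1,2} \<and> (u \<noteq> [] \<longrightarrow> last u \<noteq> a)"
  by (auto simp: reduced_iff_successively successively_append_iff)

lemma reduced_butlast: "reduced u \<Longrightarrow> reduced (butlast u)"
  by (metis append_butlast_last_id butlast.simps(1) reduced_snoc)

lemma reduced_rev: "reduced (rev u) \<longleftrightarrow> reduced u"
proof -
  have "successively (\<lambda>x y::nat. y \<noteq> x) u = successively (\<noteq>) u"
    by (rule successively_cong) auto
  then show ?thesis by (simp add: reduced_iff_successively)
qed

lemma reduced_letters: "reduced w \<Longrightarrow> set w \<subseteq> {0,1,2}"
  by (simp add: reduced_iff_successively)

lemma reduced_red_snoc: "reduced u \<Longrightarrow> a \<in> {0,1,2} \<Longrightarrow> reduced (red_snoc u a)"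
  by (auto simp: red_snoc_def reduced_butlast reduced_snoc)

lemma red_snoc_red_snoc:
  assumes "reduced u"
  shows "red_snoc (red_snoc u a) a = u"
proof (cases "u \<noteq> [] \<and> last u = a")
  case True
  then obtain b where b: "u = b @ [a]" by (metis append_butlast_last_id)
  then have "b \<noteq> [] \<longrightarrow> last b \<noteq> a" using assms reduced_snoc by blast
  then show ?thesis using b by (auto simp: red_snoc_def)
qed (auto simp: red_snoc_def)

lemma reduced_red_app: "reduced u \<Longrightarrow> set v \<subseteq> {0,1,2} \<Longrightarrow> reduced (red_app u v)"
  by (induction v arbitrary: u) (auto simp: red_app_Cons reduced_red_snoc)

lemma red_app_Nil: "reduced v \<Longrightarrow> red_app [] v = v"
proof (induction v rule: rev_induct)
  case (snoc a v)
  then show ?case by (auto simp: red_app_snoc reduced_snoc red_snoc_def)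
qed simp

lemma red_app_red_snoc:
  assumes u: "reduced u" and v: "reduced v" and a: "a \<in> {0,1,2}"
  shows "red_app u (red_snoc v a) = red_snoc (red_app u v) a"
proof (cases "v \<noteq> [] \<and> last v = a")
  case True
  then obtain v' where v': "v = v' @ [a]" by (metis append_butlast_last_id)
  then have "reduced v'" using v reduced_snoc by auto
  then have "red_snoc (red_app u v) a = red_app u v'"
    by (simp add: v' red_app_snoc red_snoc_red_snoc reduced_red_app[OF u reduced_letters])
  then show ?thesis using True v' by (simp add: red_snoc_def)
next
  case False
  then have "red_snoc v a = v @ [a]" by (auto simp: red_snoc_def)
  then show ?thesis by (simp add: red_app_snoc)
qed

lemma red_app_assoc:
  "reduced u \<Longrightarrow> reduced v \<Longrightarrow> set w \<subseteq> {0,1,2} \<Longrightarrow>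
   red_app u (red_app v w) = red_app (red_app u v) w"
proof (induction w arbitrary: v)
  case (Cons a w)
  then have a: "a \<in> {0,1,2}" and "reduced (red_snoc v a)" by (auto intro: reduced_red_snoc)
  with Cons show ?case by (simp add: red_app_Cons red_app_red_snoc)
qed simp

lemma red_app_rev: "reduced u \<Longrightarrow> red_app u (rev u) = []"
proof (induction u rule: rev_induct)
  case (snoc a u)
  then show ?case by (simp add: red_app_Cons red_snoc_def reduced_snoc)
qed simp

lemma length_red_app_le: "length (red_app u v) \<le> length u + length v"
proof (induction v arbitrary: u)
  case (Cons a v)
  have "length (red_snoc u a) \<le> Suc (length u)" by (auto simp: red_snoc_def)
  with Cons.IH[of "red_snoc u a"] show ?case by (simp add: red_app_Cons)
qed simp

lemma even_length_red_app: "even (length (red_app u v)) \<longleftrightarrow> even (length u + length v)"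
proof (induction v arbitrary: u)
  case (Cons a v)
  have "even (length (red_snoc u a)) \<longleftrightarrow> odd (length u)"
    by (cases u rule: rev_cases) (auto simp: red_snoc_def)
  then show ?case by (simp add: red_app_Cons Cons.IH) blast
qed simp

notation g2_mult (infixl "\<star>" 70)

lemma reduced_Rep_G2: "reduced (Rep_G2 x)"
  using Rep_G2 by simp

lemma Rep_G2_mult: "Rep_G2 (x \<star> y) = red_app (Rep_G2 x) (Rep_G2 y)"
  unfolding g2_mult_def
  by (rule Abs_G2_inverse)
    (simp add: reduced_red_app[OF reduced_Rep_G2 reduced_letters[OF reduced_Rep_G2]])

lemma Rep_G2_one: "Rep_G2 g2_one = []"
  unfolding g2_one_def by (simp add: Abs_G2_inverse)

lemma Rep_G2_gen: "i < 3 \<Longrightarrow> Rep_G2 (gen i) = [i]"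
  unfolding gen_def by (rule Abs_G2_inverse) (auto simp: reduced_def)

lemma g2_mult_assoc: "x \<star> y \<star> z = x \<star> (y \<star> z)"
  by (metis Rep_G2_inject Rep_G2_mult reduced_Rep_G2 red_app_assoc reduced_letters)

lemma g2_one_left [simp]: "g2_one \<star> x = x"
  by (metis Rep_G2_inject Rep_G2_mult Rep_G2_one reduced_Rep_G2 red_app_Nil)

lemma g2_one_right [simp]: "x \<star> g2_one = x"
  by (metis Rep_G2_inject Rep_G2_mult Rep_G2_one red_app.simps(1))

definition g2_inv :: "G2 \<Rightarrow> G2" where
  "g2_inv x = Abs_G2 (rev (Rep_G2 x))"

lemma Rep_G2_inv: "Rep_G2 (g2_inv x) = rev (Rep_G2 x)"
  unfolding g2_inv_def by (rule Abs_G2_inverse) (simp add: reduced_rev reduced_Rep_G2)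

lemma g2_inv_right [simp]: "x \<star> g2_inv x = g2_one"
  by (metis Rep_G2_inject Rep_G2_inv Rep_G2_mult Rep_G2_one reduced_Rep_G2 red_app_rev)

lemma g2_inv_left [simp]: "g2_inv x \<star> x = g2_one"
  by (metis Rep_G2_inject Rep_G2_inv Rep_G2_mult Rep_G2_one reduced_Rep_G2 red_app_rev
      reduced_rev rev_rev_ident)

lemma g2_inv_mult_cancel_left [simp]: "g2_inv x \<star> (x \<star> y) = y"
  by (simp add: g2_mult_assoc[symmetric])

lemma g2_mult_inv_cancel_left [simp]: "x \<star> (g2_inv x \<star> y) = y"
  by (simp add: g2_mult_assoc[symmetric])

lemma g2_mult_left_cancel: "x \<star> y = x \<star> z \<longleftrightarrow> y = z"
  by (metis g2_inv_mult_cancel_left)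

lemma g2_inv_unique: "x \<star> y = g2_one \<Longrightarrow> y = g2_inv x"
  by (metis g2_inv_mult_cancel_left g2_one_right)

lemma g2_inv_mult: "g2_inv (x \<star> y) = g2_inv y \<star> g2_inv x"
  by (rule g2_inv_unique[symmetric]) (simp add: g2_mult_assoc)

lemma carrier_G2grp [simp]: "carrier G2grp = UNIV"
  by (simp add: G2grp_def)

lemma mult_G2grp [simp]: "x \<otimes>\<^bsub>G2grp\<^esub> y = x \<star> y"
  by (simp add: G2grp_def)

lemma group_G2grp: "group G2grp"
proof (rule groupI)
  show "\<exists>y\<in>carrier G2grp. y \<otimes>\<^bsub>G2grp\<^esub> x = \<one>\<^bsub>G2grp\<^esub>" for x
    by (rule bexI[of _ "g2_inv x"]) (auto simp: G2grp_def)
qed (auto simp: G2grp_def g2_mult_assoc)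

lemma inv_G2grp: "inv\<^bsub>G2grp\<^esub> x = g2_inv x"
  by (rule group.inv_equality[OF group_G2grp]) (auto simp: G2grp_def)

definition word_length :: "G2 \<Rightarrow> nat" where
  "word_length x = length (Rep_G2 x)"

lemma word_length_one [simp]: "word_length g2_one = 0"
  by (simp add: word_length_def Rep_G2_one)

lemma word_length_gen: "i < 3 \<Longrightarrow> word_length (gen i) = 1"
  by (simp add: word_length_def Rep_G2_gen)

lemma word_length_inv [simp]: "word_length (g2_inv x) = word_length x"
  by (simp add: word_length_def Rep_G2_inv)

lemma word_length_mult_le: "word_length (x \<star> y) \<le> word_length x + word_length y"
  by (simp add: word_length_def Rep_G2_mult length_red_app_le)

lemma even_word_length_mult:
  "even (word_length (x \<star> y)) \<longleftrightarrow> even (word_length x + word_length y)"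
  by (simp add: word_length_def Rep_G2_mult even_length_red_app)

lemma finite_word_length_le: "finite {x. word_length x \<le> n}"
proof (rule finite_imageD)
  have "Rep_G2 ` {x. word_length x \<le> n} \<subseteq> {w. set w \<subseteq> {0,1,2} \<and> length w \<le> n}"
    using reduced_letters[OF reduced_Rep_G2] by (auto simp: word_length_def)
  then show "finite (Rep_G2 ` {x. word_length x \<le> n})"
    by (rule finite_subset) (simp add: finite_lists_length_le)
  show "inj_on Rep_G2 {x. word_length x \<le> n}"
    by (rule inj_onI) (simp add: Rep_G2_inject)
qed

lemma Abs_G2_snoc: "reduced (w @ [a]) \<Longrightarrow> Abs_G2 (w @ [a]) = Abs_G2 w \<star> gen a"
  by (auto simp: Rep_G2_inject[symmetric] Rep_G2_mult Rep_G2_gen Abs_G2_inverse reduced_snoc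
      red_app_Cons red_snoc_def reduced_butlast)

lemma G2_length_induct [case_names one mult_gen]:
  assumes "P g2_one"
    and "\<And>x i. i < 3 \<Longrightarrow> word_length (x \<star> gen i) = Suc (word_length x) \<Longrightarrow> P x \<Longrightarrow>
           P (x \<star> gen i)"
  shows "P x"
proof -
  have "P (Abs_G2 w)" if "reduced w" for w
    using that
  proof (induction w rule: rev_induct)
    case Nil
    then show ?case using assms(1) by (simp add: g2_one_def)
  next
    case (snoc a w)
    then have w: "reduced w" and a: "a < 3" by (auto simp: reduced_snoc)
    have "word_length (Abs_G2 w \<star> gen a) = Suc (word_length (Abs_G2 w))"
      using snoc.prems w by (simp add: Abs_G2_snoc[symmetric] word_length_def Abs_G2_inverse)
    then show ?case using assms(2)[OF a _ snoc.IH[OF w]] Abs_G2_snoc[OF snoc.prems] by simp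
  qed
  then show ?thesis using reduced_Rep_G2 Rep_G2_inverse by metis
qed

section \<open>Geometry of the Cayley tree\<close>

lemma Rep_G2_gen_gen:
  "i < 3 \<Longrightarrow> j < 3 \<Longrightarrow> Rep_G2 (gen i \<star> gen j) = (if i = j then [] else [i, j])"
  by (simp add: Rep_G2_mult Rep_G2_gen red_app_Cons red_snoc_def)

lemma gen_gen [simp]: "i < 3 \<Longrightarrow> gen i \<star> gen i = g2_one"
  using Rep_G2_gen_gen[of i i] by (simp add: Rep_G2_inject[symmetric] Rep_G2_one)

lemma mult_gen_gen [simp]: "i < 3 \<Longrightarrow> x \<star> gen i \<star> gen i = x"
  by (simp add: g2_mult_assoc)

lemma g2_inv_gen [simp]: "i < 3 \<Longrightarrow> g2_inv (gen i) = gen i"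
  by (metis gen_gen g2_inv_unique)

lemma gen_eq_iff: "i < 3 \<Longrightarrow> j < 3 \<Longrightarrow> gen i = gen j \<longleftrightarrow> i = j"
  by (metis Rep_G2_gen list.inject)

lemma mult_gen_eq_iff: "i < 3 \<Longrightarrow> j < 3 \<Longrightarrow> x \<star> gen i = x \<star> gen j \<longleftrightarrow> i = j"
  by (simp add: g2_mult_left_cancel gen_eq_iff)

lemma even_word_length_mult_gen:
  "i < 3 \<Longrightarrow> even (word_length (x \<star> gen i)) \<longleftrightarrow> odd (word_length x)"
  by (simp add: even_word_length_mult word_length_gen)

lemma mult_gen_neq: "i < 3 \<Longrightarrow> x \<star> gen i \<noteq> x"
  using even_word_length_mult_gen[of i x] by auto

lemma word_length_le_2_cases:
  assumes "word_length w \<le> 2"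
  obtains "w = g2_one" | i where "i < 3" "w = gen i"
    | i j where "i < 3" "j < 3" "i \<noteq> j" "w = gen i \<star> gen j"
proof -
  have "set (Rep_G2 w) \<subseteq> {0,1,2}" "successively (\<noteq>) (Rep_G2 w)" "length (Rep_G2 w) \<le> 2"
    using reduced_Rep_G2[of w] assms by (auto simp: reduced_iff_successively word_length_def)
  then consider "Rep_G2 w = []" | i where "i < 3" "Rep_G2 w = [i]"
    | i j where "i < 3" "j < 3" "i \<noteq> j" "Rep_G2 w = [i, j]"
    by (cases "Rep_G2 w" rule: remdups_adj.cases) auto
  then show thesis
  proof cases
    case 1
    then have "Rep_G2 w = Rep_G2 g2_one" by (simp add: Rep_G2_one)
    then show thesis using that(1) by (simp add: Rep_G2_inject)
  next
    case (2 i)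
    then have "Rep_G2 w = Rep_G2 (gen i)" by (simp add: Rep_G2_gen)
    then show thesis using that(2) 2 by (simp add: Rep_G2_inject)
  next
    case (3 i j)
    then have "Rep_G2 w = Rep_G2 (gen i \<star> gen j)" by (simp add: Rep_G2_gen_gen)
    then show thesis using that(3) 3 by (simp add: Rep_G2_inject)
  qed
qed

lemma relpow_adj_imp_word_length: "(adj ^^ n) x y \<Longrightarrow> word_length (g2_inv x \<star> y) \<le> n"
proof (induction n arbitrary: y)
  case (Suc n)
  then obtain z where "(adj ^^ n) x z" "adj z y" by auto
  moreover from \<open>adj z y\<close> obtain i where "i < 3" "y = z \<star> gen i" by (auto simp: adj_def)
  ultimately show ?case
    using Suc.IH[of z] word_length_mult_le[of "g2_inv x \<star> z" "gen i"]
    by (simp add: g2_mult_assoc[symmetric] word_length_gen)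
qed simp

lemma relpow_adj_word_length: "(adj ^^ word_length w) x (x \<star> w)"
proof (induction w arbitrary: x rule: G2_length_induct)
  case (mult_gen w i)
  then have "adj (x \<star> w) (x \<star> (w \<star> gen i))" by (auto simp: adj_def g2_mult_assoc)
  with mult_gen show ?case by (metis relpowp_Suc_I)
qed simp

lemma gdist_eq: "gdist x y = word_length (g2_inv x \<star> y)"
  unfolding gdist_def
  using relpow_adj_word_length[of "g2_inv x \<star> y" x]
  by (intro Least_equality) (simp_all add: relpow_adj_imp_word_length)

lemma gdist_self [simp]: "gdist x x = 0"
  by (simp add: gdist_eq)

lemma gdist_sym: "gdist x y = gdist y x"
proof -
  have "g2_inv (g2_inv x \<star> y) = g2_inv y \<star> x"
    by (rule g2_inv_unique[symmetric]) (simp add: g2_mult_assoc)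
  then show ?thesis by (metis gdist_eq word_length_inv)
qed

lemma gdist_triangle: "gdist x z \<le> gdist x y + gdist y z"
proof -
  have "g2_inv x \<star> z = (g2_inv x \<star> y) \<star> (g2_inv y \<star> z)"
    by (simp add: g2_mult_assoc)
  then show ?thesis by (metis gdist_eq word_length_mult_le)
qed

lemma gdist_mult_gen: "i < 3 \<Longrightarrow> gdist x (x \<star> gen i) = 1"
  by (simp add: gdist_eq word_length_gen)

lemma gdist_mult_gen_gen:
  "i < 3 \<Longrightarrow> j < 3 \<Longrightarrow> gdist (x \<star> gen i) (x \<star> gen j) = (if i = j then 0 else 2)"
  by (simp add: gdist_eq g2_inv_mult g2_mult_assoc word_length_def Rep_G2_gen_gen)

lemma ball1_eq: "ball1 x = insert x ((\<lambda>i. x \<star> gen i) ` {..<3})"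
proof -
  have "y \<in> insert x ((\<lambda>i. x \<star> gen i) ` {..<3})" if "gdist x y \<le> 1" for y
  proof -
    define w where "w = g2_inv x \<star> y"
    have y: "y = x \<star> w" by (simp add: w_def)
    have w: "word_length w \<le> 1" using that by (simp add: gdist_eq w_def)
    then have "word_length w \<le> 2" by simp
    then show ?thesis
      by (cases rule: word_length_le_2_cases)
        (use w y in \<open>auto simp: word_length_def Rep_G2_gen_gen\<close>)
  qed
  then show ?thesis by (auto simp: ball1_def gdist_mult_gen)
qed

lemma mem_ball2_cases:
  assumes "y \<in> ball2 x"
  obtains "y = x" | i where "i < 3" "y = x \<star> gen i"
    | i j where "i < 3" "j < 3" "y = x \<star> gen i \<star> gen j"
proof -
  define w where "w = g2_inv x \<star> y"
  have y: "y = x \<star> w" by (simp add: w_def)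
  have "word_length w \<le> 2" using assms by (simp add: ball2_def gdist_eq w_def)
  then show thesis
    by (cases rule: word_length_le_2_cases) (use that y in \<open>auto simp: g2_mult_assoc\<close>)
qed

lemma gdist_eq_2_iff:
  "gdist u v = 2 \<longleftrightarrow> (\<exists>m i j. i < 3 \<and> j < 3 \<and> i \<noteq> j \<and> u = m \<star> gen i \<and> v = m \<star> gen j)"
proof
  assume d: "gdist u v = 2"
  define w where "w = g2_inv u \<star> v"
  have v: "v = u \<star> w" by (simp add: w_def)
  have "word_length w \<le> 2" using d by (simp add: gdist_eq w_def)
  then show "\<exists>m i j. i < 3 \<and> j < 3 \<and> i \<noteq> j \<and> u = m \<star> gen i \<and> v = m \<star> gen j"
  proof (cases rule: word_length_le_2_cases)
    case (3 i j)
    then have "u = (u \<star> gen i) \<star> gen i" "v = (u \<star> gen i) \<star> gen j"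
      by (simp_all add: v g2_mult_assoc)
    then show ?thesis using 3 by blast
  qed (use d in \<open>simp_all add: gdist_eq w_def[symmetric] word_length_gen\<close>)
next
  assume "\<exists>m i j. i < 3 \<and> j < 3 \<and> i \<noteq> j \<and> u = m \<star> gen i \<and> v = m \<star> gen j"
  then obtain m i j where "i < 3" "j < 3" "i \<noteq> j" "u = m \<star> gen i" "v = m \<star> gen j" by blast
  then show "gdist u v = 2" by (simp add: gdist_mult_gen_gen)
qed

lemma sibling_pair_inj:
  assumes "i < 3" "j < 3" "k < 3" "l < 3" "i \<noteq> j"
    and "m \<star> gen i = m' \<star> gen k" and "m \<star> gen j = m' \<star> gen l"
  shows "m = m' \<and> i = k \<and> j = l"
proof -
  have "g2_inv (m \<star> gen i) \<star> (m \<star> gen j) = g2_inv (m' \<star> gen k) \<star> (m' \<star> gen l)"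
    using assms(6,7) by simp
  then have "gen i \<star> gen j = gen k \<star> gen l"
    using assms(1-4) by (simp add: g2_inv_mult g2_mult_assoc)
  then have "Rep_G2 (gen k \<star> gen l) = [i, j]"
    using assms(1,2,5) by (metis Rep_G2_gen_gen)
  then have ik: "i = k \<and> j = l"
    using assms(3,4) by (simp add: Rep_G2_gen_gen split: if_splits)
  then have "m \<star> gen i \<star> gen i = m' \<star> gen i \<star> gen i" using assms(6) by simp
  with ik show ?thesis using assms(1) by simp
qed

lemma gdist_ball_eq_image: "{z. gdist y z \<le> n} = (\<lambda>w. y \<star> w) ` {w. word_length w \<le> n}"
proof -
  have "z \<in> (\<lambda>w. y \<star> w) ` {w. word_length w \<le> n}" if "gdist y z \<le> n" for z
    using that by (intro image_eqI[of _ _ "g2_inv y \<star> z"]) (simp_all add: gdist_eq)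
  then show ?thesis by (auto simp: gdist_eq)
qed

lemma finite_gdist_ball: "finite {z. gdist y z \<le> n}"
  by (simp add: gdist_ball_eq_image finite_word_length_le)

lemma card_gdist_ball: "card {z. gdist y z \<le> n} = card {w. word_length w \<le> n}"
proof -
  have "inj (\<lambda>w. y \<star> w)" by (rule injI) (simp add: g2_mult_left_cancel)
  then show ?thesis by (simp add: gdist_ball_eq_image card_image inj_on_subset)
qed

lemma adj_mult_gen: "i < 3 \<Longrightarrow> adj x (x \<star> gen i)"
  by (auto simp: adj_def)

lemma adj_sym: "adj u v \<Longrightarrow> adj v u"
  unfolding adj_def by (metis mult_gen_gen)

lemma adj_word_length_parity: "adj u v \<Longrightarrow> even (word_length v) \<longleftrightarrow> odd (word_length u)"
  by (auto simp: adj_def even_word_length_mult_gen)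

definition sibling_pairs :: "(nat \<times> nat) set" where
  "sibling_pairs = {(i, j). i < 3 \<and> j < 3 \<and> i \<noteq> j}"

lemma sibling_pairs_eq: "sibling_pairs = {(0,1), (0,2), (1,0), (1,2), (2,0), (2,1)}"
  by (auto simp: sibling_pairs_def)

lemma finite_sibling_pairs [simp]: "finite sibling_pairs"
  by (simp add: sibling_pairs_eq)

definition site_energy :: "real \<Rightarrow> real \<Rightarrow> (G2 \<Rightarrow> int) \<Rightarrow> G2 \<Rightarrow> real" where
  "site_energy J1 J2 \<phi> x =
     J1 / 2 * (\<Sum>i<3. of_int (\<phi> x * \<phi> (x \<star> gen i)))
   + J2 / 2 * (\<Sum>(i, j)\<in>sibling_pairs. of_int (\<phi> (x \<star> gen i) * \<phi> (x \<star> gen j)))"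

lemma adj_pairs_in_ball1:
  "{(u, v). u \<in> ball1 x \<and> v \<in> ball1 x \<and> adj u v}
     = (\<lambda>i. (x, x \<star> gen i)) ` {..<3} \<union> (\<lambda>i. (x \<star> gen i, x)) ` {..<3}"
    (is "?A = ?B")
proof (rule equalityI)
  have leaf_parity: "even (word_length u) \<longleftrightarrow> odd (word_length x)" if "u \<in> ball1 x - {x}" for u
    using that by (auto simp: ball1_eq even_word_length_mult_gen)
  show "?A \<subseteq> ?B"
  proof
    fix p assume "p \<in> ?A"
    then obtain u v where p: "p = (u, v)" and u: "u \<in> ball1 x" and v: "v \<in> ball1 x"
      and uv: "adj u v" by blast
    have "u = x \<or> v = x"
      using u v leaf_parity[of u] leaf_parity[of v] adj_word_length_parity[OF uv] by blast
    moreover have "u \<noteq> v" using adj_word_length_parity[OF uv] by blast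
    ultimately show "p \<in> ?B"
      using p u v uv by (auto simp: ball1_eq adj_def)
  qed
  show "?B \<subseteq> ?A"
    by (auto simp: ball1_eq adj_mult_gen intro: adj_sym)
qed

lemma dist2_pairs_in_ball1:
  "{(u, v). u \<in> ball1 x \<and> v \<in> ball1 x \<and> gdist u v = 2}
     = (\<lambda>(i, j). (x \<star> gen i, x \<star> gen j)) ` sibling_pairs"
    (is "?A = ?B")
proof (rule equalityI)
  show "?A \<subseteq> ?B"
  proof clarify
    fix u v assume u: "u \<in> ball1 x" and v: "v \<in> ball1 x" and uv: "gdist u v = 2"
    have "u \<noteq> x" using v uv by (auto simp: ball1_eq gdist_eq word_length_gen)
    moreover have "v \<noteq> x" using u uv gdist_sym[of u x] by (auto simp: ball1_eq gdist_mult_gen)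
    ultimately obtain i j where "i < 3" "j < 3" "u = x \<star> gen i" "v = x \<star> gen j"
      using u v by (auto simp: ball1_eq)
    moreover from this have "i \<noteq> j" using uv by (auto simp: gdist_mult_gen_gen)
    ultimately show "(u, v) \<in> ?B" by (auto simp: sibling_pairs_def)
  qed
  show "?B \<subseteq> ?A"
    by (auto simp: ball1_eq sibling_pairs_def gdist_mult_gen_gen)
qed

lemma ball_energy_eq_site_energy: "ball_energy J1 J2 \<phi> x = site_energy J1 J2 \<phi> x"
proof -
  let ?f = "\<lambda>p. real_of_int (\<phi> (fst p) * \<phi> (snd p))"
  have inj_out: "inj_on (\<lambda>i. (x, x \<star> gen i)) {..<3}"
    and inj_in: "inj_on (\<lambda>i. (x \<star> gen i, x)) {..<3}"
    and inj_sib: "inj_on (\<lambda>(i, j). (x \<star> gen i, x \<star> gen j)) sibling_pairs"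
    by (auto simp: inj_on_def mult_gen_eq_iff sibling_pairs_def)
  have "(\<lambda>i. (x, x \<star> gen i)) ` {..<3} \<inter> (\<lambda>i. (x \<star> gen i, x)) ` {..<3} = {}"
    using mult_gen_neq by fastforce
  then have "(\<Sum>p\<in>{(u, v). u \<in> ball1 x \<and> v \<in> ball1 x \<and> adj u v}. ?f p)
      = 2 * (\<Sum>i<3. of_int (\<phi> x * \<phi> (x \<star> gen i)))"
    unfolding adj_pairs_in_ball1
    by (simp add: sum.union_disjoint sum.reindex[OF inj_out] sum.reindex[OF inj_in] mult.commute)
  moreover have "(\<Sum>p\<in>{(u, v). u \<in> ball1 x \<and> v \<in> ball1 x \<and> gdist u v = 2}. ?f p)
      = (\<Sum>(i, j)\<in>sibling_pairs. of_int (\<phi> (x \<star> gen i) * \<phi> (x \<star> gen j)))"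
    unfolding dist2_pairs_in_ball1 sum.reindex[OF inj_sib] by (simp add: case_prod_beta)
  ultimately show ?thesis
    by (simp add: ball_energy_def site_energy_def)
qed

lemma lessThan_3: "{..<3} = {0, 1, 2 :: nat}"
  by auto

lemma all_less_3: "(\<forall>i<3. P i) \<longleftrightarrow> P 0 \<and> P 1 \<and> P (2::nat)"
  by (auto simp: numeral_3_eq_3 numeral_2_eq_2 less_Suc_eq)

lemma card_less_Suc_filter:
  "card {i. i < Suc n \<and> P i} = card {i. i < n \<and> P i} + of_bool (P n)"
proof (cases "P n")
  case True
  then have "{i. i < Suc n \<and> P i} = insert n {i. i < n \<and> P i}" by (auto simp: less_Suc_eq)
  then show ?thesis using True by simp
next
  case False
  then have "{i. i < Suc n \<and> P i} = {i. i < n \<and> P i}" by (auto simp: less_Suc_eq)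
  then show ?thesis using False by simp
qed

lemma card_less_3: "card {i. i < 3 \<and> P i} = of_bool (P 0) + of_bool (P 1) + of_bool (P (2::nat))"
  unfolding numeral_3_eq_3 card_less_Suc_filter by (simp add: numeral_2_eq_2)

lemma same_leaves_eq: "same_leaves x \<phi> = card {i. i < 3 \<and> \<phi> (x \<star> gen i) = \<phi> x}"
proof -
  have "{u \<in> ball1 x - {x}. \<phi> u = \<phi> x} = (\<lambda>i. x \<star> gen i) ` {i. i < 3 \<and> \<phi> (x \<star> gen i) = \<phi> x}"
    by (auto simp: ball1_eq mult_gen_neq)
  moreover have "inj_on (\<lambda>i. x \<star> gen i) {i. i < 3 \<and> \<phi> (x \<star> gen i) = \<phi> x}"
    by (auto simp: inj_on_def mult_gen_eq_iff)
  ultimately show ?thesis by (simp add: same_leaves_def card_image)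
qed

lemma spin_energy_eq_Uval:
  fixes s0 s1 s2 s3 :: int and J1 J2 :: real
  assumes "s0 \<in> {-1, 1}" "s1 \<in> {-1, 1}" "s2 \<in> {-1, 1}" "s3 \<in> {-1, 1}"
  shows "J1 / 2 * (of_int (s0 * s1) + of_int (s0 * s2) + of_int (s0 * s3))
       + J2 / 2 * (2 * of_int (s1 * s2) + 2 * of_int (s1 * s3) + 2 * of_int (s2 * s3))
   = Uval J1 J2 (let n = of_bool (s1 = s0) + of_bool (s2 = s0) + of_bool (s3 = s0) :: nat in
        if n = 3 then 1 else if n = 2 then 2 else if n = 1 then 4 else 3)"
  using assms by (auto simp: Uval_def algebra_simps)

lemma is_config_spin: "is_config \<phi> \<Longrightarrow> \<phi> x \<in> {-1, 1}"
  by (simp add: is_config_def)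

lemma site_energy_eq_Uval:
  assumes "is_config \<phi>"
  shows "site_energy J1 J2 \<phi> x = Uval J1 J2 (ball_class x \<phi>)"
proof -
  note spin = is_config_spin[OF assms]
  have "site_energy J1 J2 \<phi> x
      = J1 / 2 * (of_int (\<phi> x * \<phi> (x \<star> gen 0)) + of_int (\<phi> x * \<phi> (x \<star> gen 1))
                  + of_int (\<phi> x * \<phi> (x \<star> gen 2)))
      + J2 / 2 * (2 * of_int (\<phi> (x \<star> gen 0) * \<phi> (x \<star> gen 1))
                  + 2 * of_int (\<phi> (x \<star> gen 0) * \<phi> (x \<star> gen 2))
                  + 2 * of_int (\<phi> (x \<star> gen 1) * \<phi> (x \<star> gen 2)))"
    by (simp add: site_energy_def sibling_pairs_eq lessThan_3 algebra_simps)
  then show ?thesis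
    using spin_energy_eq_Uval[OF spin[of x] spin[of "x \<star> gen 0"] spin[of "x \<star> gen 1"]
        spin[of "x \<star> gen 2"], of J1 J2]
    by (simp add: ball_class_def same_leaves_eq card_less_3 Let_def)
qed

lemma ball_class_1_iff: "ball_class x \<phi> = 1 \<longleftrightarrow> (\<forall>i<3. \<phi> (x \<star> gen i) = \<phi> x)"
  by (simp add: ball_class_def same_leaves_eq card_less_3 all_less_3)

lemma ball_class_3_iff: "ball_class x \<phi> = 3 \<longleftrightarrow> (\<forall>i<3. \<phi> (x \<star> gen i) \<noteq> \<phi> x)"
  by (simp add: ball_class_def same_leaves_eq card_less_3 all_less_3)

lemma ball_class_range: "ball_class x \<phi> \<in> {1, 2, 3, 4}"
  by (simp add: ball_class_def)

lemma Umin_le_Uval: "m \<in> {1, 2, 3, 4} \<Longrightarrow> Umin J1 J2 \<le> Uval J1 J2 m"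
  unfolding Umin_def by (rule Min_le) auto

lemma ball_class_in_Sset_iff:
  "is_config \<phi> \<Longrightarrow> ball_class x \<phi> \<in> Sset J1 J2 \<longleftrightarrow> ball_energy J1 J2 \<phi> x = Umin J1 J2"
  using ball_class_range[of x \<phi>]
  by (simp add: Sset_def ball_energy_eq_site_energy site_energy_eq_Uval)

section \<open>Ground states when only the classes \<open>\<C>\<^sub>1\<close> and \<open>\<C>\<^sub>3\<close> are minimal\<close>

lemma unit_power_parity: "(\<epsilon>::int) \<in> {-1, 1} \<Longrightarrow> \<epsilon> ^ n = (if even n then 1 else \<epsilon>)"
  by (auto simp: minus_one_power_iff)

definition sign_pattern :: "int \<Rightarrow> int \<Rightarrow> G2 \<Rightarrow> int" where
  "sign_pattern \<epsilon> c x = c * \<epsilon> ^ word_length x"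

lemma sign_pattern_one [simp]: "sign_pattern \<epsilon> c g2_one = c"
  by (simp add: sign_pattern_def)

lemma sign_pattern_mult_gen:
  "\<epsilon> \<in> {-1, 1} \<Longrightarrow> i < 3 \<Longrightarrow> sign_pattern \<epsilon> c (x \<star> gen i) = \<epsilon> * sign_pattern \<epsilon> c x"
  using even_word_length_mult_gen[of i x] by (auto simp: sign_pattern_def unit_power_parity)

lemma is_config_sign_pattern: "\<epsilon> \<in> {-1, 1} \<Longrightarrow> c \<in> {-1, 1} \<Longrightarrow> is_config (sign_pattern \<epsilon> c)"
  by (auto simp: is_config_def sign_pattern_def unit_power_parity)

definition class_sign :: "nat \<Rightarrow> int" where
  "class_sign m = (if m = 1 then 1 else -1)"

lemma class_sign_in_units: "class_sign m \<in> {-1, 1}"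
  by (simp add: class_sign_def)

lemma neighbour_spin:
  assumes "is_config \<phi>" "ball_class x \<phi> \<in> {1, 3}" "i < 3"
  shows "\<phi> (x \<star> gen i) = class_sign (ball_class x \<phi>) * \<phi> x"
proof -
  from assms(2) consider "ball_class x \<phi> = 1" | "ball_class x \<phi> = 3" by blast
  then show ?thesis
  proof cases
    case 1
    then have "\<phi> (x \<star> gen i) = \<phi> x" using ball_class_1_iff assms(3) by blast
    then show ?thesis using 1 by (simp add: class_sign_def)
  next
    case 2
    then have "\<phi> (x \<star> gen i) \<noteq> \<phi> x" using ball_class_3_iff assms(3) by blast
    moreover have "\<phi> (x \<star> gen i) \<in> {-1, 1}" "\<phi> x \<in> {-1, 1}"
      using is_config_spin[OF assms(1)] by blast+
    ultimately show ?thesis using 2 by (auto simp: class_sign_def)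
  qed
qed

lemma ball_class_sign_pattern:
  assumes "\<epsilon> \<in> {-1, 1}" "c \<in> {-1, 1}"
  shows "ball_class x (sign_pattern \<epsilon> c) = (if \<epsilon> = 1 then 1 else 3)"
proof -
  let ?\<psi> = "sign_pattern \<epsilon> c"
  have leaf: "?\<psi> (x \<star> gen i) = \<epsilon> * ?\<psi> x" if "i < 3" for i
    by (rule sign_pattern_mult_gen[OF assms(1) that])
  show ?thesis
  proof (cases "\<epsilon> = 1")
    case True
    then have "ball_class x ?\<psi> = 1"
      using leaf by (intro ball_class_1_iff[THEN iffD2]) simp
    then show ?thesis using True by simp
  next
    case False
    have "?\<psi> x \<noteq> 0" using assms by (auto simp: sign_pattern_def unit_power_parity)
    then have "ball_class x ?\<psi> = 3"
      using leaf False assms(1) by (intro ball_class_3_iff[THEN iffD2]) auto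
    then show ?thesis using False by simp
  qed
qed

lemma ball_class_propagates:
  assumes "is_config \<phi>" "i < 3"
    and "ball_class x \<phi> \<in> {1, 3}" "ball_class (x \<star> gen i) \<phi> \<in> {1, 3}"
  shows "ball_class (x \<star> gen i) \<phi> = ball_class x \<phi>"
proof -
  have "\<phi> x = \<phi> (x \<star> gen i \<star> gen i)" using assms(2) by simp
  also have "\<dots> = class_sign (ball_class (x \<star> gen i) \<phi>) * class_sign (ball_class x \<phi>) * \<phi> x"
    using neighbour_spin[OF assms(1,4,2)] neighbour_spin[OF assms(1,3,2)] by simp
  moreover have "\<phi> x \<noteq> 0" using is_config_spin[OF assms(1), of x] by auto
  ultimately have "class_sign (ball_class (x \<star> gen i) \<phi>) * class_sign (ball_class x \<phi>) = 1"
    by simp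
  then show ?thesis using assms(3,4) by (auto simp: class_sign_def)
qed

lemma ball_class_constant:
  assumes "is_config \<phi>" "\<forall>x. ball_class x \<phi> \<in> {1, 3}"
  shows "ball_class x \<phi> = ball_class g2_one \<phi>"
proof (induction x rule: G2_length_induct)
  case (mult_gen x i)
  have "ball_class (x \<star> gen i) \<phi> = ball_class x \<phi>"
    using assms mult_gen(1) by (simp add: ball_class_propagates)
  then show ?case using mult_gen.IH by simp
qed simp

lemma eq_sign_pattern_if_classes_in_1_3:
  assumes "is_config \<phi>" "\<forall>x. ball_class x \<phi> \<in> {1, 3}"
  shows "\<phi> y = sign_pattern (class_sign (ball_class g2_one \<phi>)) (\<phi> g2_one) y"
proof (induction y rule: G2_length_induct)
  case (mult_gen x i)
  have "\<phi> (x \<star> gen i) = class_sign (ball_class g2_one \<phi>) * \<phi> x"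
    using neighbour_spin[OF assms(1) _ mult_gen(1)] assms(2) ball_class_constant[OF assms]
    by metis
  also have "\<dots> = sign_pattern (class_sign (ball_class g2_one \<phi>)) (\<phi> g2_one) (x \<star> gen i)"
    using mult_gen.IH by (simp add: sign_pattern_mult_gen[OF class_sign_in_units mult_gen(1)])
  finally show ?case .
qed simp

definition even_words :: "G2 set" where
  "even_words = {g. even (word_length g)}"

lemma subgroup_even_words: "subgroup even_words G2grp"
proof (rule group.subgroupI[OF group_G2grp])
  show "even_words \<noteq> {}" by (auto simp: even_words_def intro: exI[of _ g2_one])
qed (auto simp: even_words_def inv_G2grp even_word_length_mult)

lemma rcosets_even_words: "rcosets\<^bsub>G2grp\<^esub> even_words \<subseteq> {even_words, - even_words}"
proof -
  have "even_words #>\<^bsub>G2grp\<^esub> a = {z. even (word_length z) = even (word_length a)}" for a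
  proof (intro equalityI subsetI)
    fix z assume "z \<in> {z. even (word_length z) = even (word_length a)}"
    then have "z \<star> g2_inv a \<in> even_words" "z = (z \<star> g2_inv a) \<star> a"
      by (simp_all add: even_words_def even_word_length_mult g2_mult_assoc)
    then show "z \<in> even_words #>\<^bsub>G2grp\<^esub> a" unfolding r_coset_def by auto
  qed (auto simp: r_coset_def even_words_def even_word_length_mult)
  then show ?thesis by (auto simp: RCOSETS_def even_words_def)
qed

lemma finite_rcosets_even_words: "finite (rcosets\<^bsub>G2grp\<^esub> even_words)"
  using rcosets_even_words by (rule finite_subset) simp

lemma card_rcosets_even_words: "card (rcosets\<^bsub>G2grp\<^esub> even_words) \<le> 2"
proof -
  have "card (rcosets\<^bsub>G2grp\<^esub> even_words) \<le> card {even_words, - even_words}"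
    using rcosets_even_words by (rule card_mono[rotated]) simp
  also have "\<dots> \<le> 2"
    by (rule card_insert_le_m1) simp_all
  finally show ?thesis .
qed

lemma period_le2_if_even_invariant:
  assumes "\<forall>g\<in>even_words. \<forall>h. \<phi> (g \<star> h) = \<phi> h"
  shows "periodic \<phi>" "period_le2 \<phi>"
proof -
  note finite_rcosets_even_words card_rcosets_even_words
  then show "periodic \<phi>" "period_le2 \<phi>"
    unfolding periodic_def period_le2_def periodic_idx_def
    using subgroup_even_words assms by (auto intro!: exI[of _ even_words])
qed

lemma period_le2_sign_pattern:
  assumes "\<epsilon> \<in> {-1, 1}"
  shows "periodic (sign_pattern \<epsilon> c)" "period_le2 (sign_pattern \<epsilon> c)"
  using assms
  by (auto intro!: period_le2_if_even_invariant
      simp: even_words_def sign_pattern_def unit_power_parity even_word_length_mult)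

lemma sign_pattern_in_GS:
  assumes "m \<in> Sset J1 J2" "m \<in> {1, 3}" "c \<in> {-1, 1}"
  shows "sign_pattern (class_sign m) c \<in> GS J1 J2"
proof -
  let ?\<psi> = "sign_pattern (class_sign m) c"
  have config: "is_config ?\<psi>"
    by (rule is_config_sign_pattern[OF class_sign_in_units assms(3)])
  have "ball_class x ?\<psi> = m" for x
    using ball_class_sign_pattern[OF class_sign_in_units assms(3)] assms(2)
    by (auto simp: class_sign_def)
  then have "ball_energy J1 J2 ?\<psi> x = Umin J1 J2" for x
    using ball_class_in_Sset_iff[OF config, of x] assms(1) by simp
  then show ?thesis
    using config period_le2_sign_pattern[OF class_sign_in_units]
    by (simp add: GS_def ground_state_def)
qed

lemma GS_config: "\<tau> \<in> GS J1 J2 \<Longrightarrow> is_config \<tau>"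
  by (simp add: GS_def ground_state_def)

lemma ball_class_GS: "\<tau> \<in> GS J1 J2 \<Longrightarrow> ball_class x \<tau> \<in> Sset J1 J2"
  by (simp add: GS_def ground_state_def ball_class_in_Sset_iff)

lemma GS_subset_sign_patterns:
  assumes "Sset J1 J2 \<subseteq> {1, 3}"
  shows "GS J1 J2 \<subseteq> {sign_pattern \<epsilon> c | \<epsilon> c. \<epsilon> \<in> {-1, 1} \<and> c \<in> {-1, 1}}"
proof
  fix \<tau> assume "\<tau> \<in> GS J1 J2"
  then have config: "is_config \<tau>" and "\<forall>x. ball_class x \<tau> \<in> {1, 3}"
    using assms GS_config ball_class_GS by blast+
  then have "\<tau> = sign_pattern (class_sign (ball_class g2_one \<tau>)) (\<tau> g2_one)"
    using eq_sign_pattern_if_classes_in_1_3 by blast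
  moreover have "\<tau> g2_one \<in> {-1, 1}" using config by (rule is_config_spin)
  ultimately show "\<tau> \<in> {sign_pattern \<epsilon> c | \<epsilon> c. \<epsilon> \<in> {-1, 1} \<and> c \<in> {-1, 1}}"
    using class_sign_in_units by blast
qed

lemma finite_GS:
  assumes "Sset J1 J2 \<subseteq> {1, 3}"
  shows "finite (GS J1 J2)"
proof (rule finite_subset[OF GS_subset_sign_patterns[OF assms]])
  have "{sign_pattern \<epsilon> c | \<epsilon> c. \<epsilon> \<in> {-1, 1} \<and> c \<in> {-1, 1}}
      = (\<lambda>(\<epsilon>, c). sign_pattern \<epsilon> c) ` ({-1, 1} \<times> {-1, 1})"
    by auto
  then show "finite {sign_pattern \<epsilon> c | \<epsilon> c. \<epsilon> \<in> {-1, 1} \<and> c \<in> {-1, 1}}" by simp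
qed

lemma period_le2_GS:
  assumes "Sset J1 J2 \<subseteq> {1, 3}" "\<tau> \<in> GS J1 J2"
  shows "period_le2 \<tau>"
  using GS_subset_sign_patterns[OF assms(1)] assms(2) period_le2_sign_pattern by blast

lemma sign_pattern_at_centre:
  assumes "\<epsilon> \<in> {-1, 1}"
  shows "sign_pattern \<epsilon> (c * \<epsilon> ^ word_length x) x = c"
proof -
  have "\<epsilon> ^ word_length x * \<epsilon> ^ word_length x = 1"
    using assms by (auto simp: unit_power_parity)
  then show ?thesis by (simp add: sign_pattern_def)
qed

lemma not_improper_if_ball_classes_in_Sset:
  assumes S: "Sset J1 J2 \<subseteq> {1, 3}" and config: "is_config \<sigma>"
    and good: "\<forall>y\<in>ball1 x. ball_class y \<sigma> \<in> Sset J1 J2"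
  shows "\<not> improper J1 J2 \<sigma> x"
proof -
  define m where "m = ball_class x \<sigma>"
  define \<epsilon> where "\<epsilon> = class_sign m"
  define \<psi> where "\<psi> = sign_pattern \<epsilon> (\<sigma> x * \<epsilon> ^ word_length x)"
  have \<epsilon>: "\<epsilon> \<in> {-1, 1}" unfolding \<epsilon>_def by (rule class_sign_in_units)
  have "x \<in> ball1 x" by (simp add: ball1_eq)
  then have mS: "m \<in> Sset J1 J2" "m \<in> {1, 3}" using good S by (auto simp: m_def)
  have leaf_class: "ball_class (x \<star> gen i) \<sigma> = m" if "i < 3" for i
  proof -
    have "x \<star> gen i \<in> ball1 x" using that by (simp add: ball1_eq)
    then have "ball_class (x \<star> gen i) \<sigma> \<in> {1, 3}" using good S by auto
    then show ?thesis using ball_class_propagates[OF config that mS(2)[unfolded m_def]]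
      by (simp add: m_def)
  qed
  have \<psi>_step: "\<psi> (y \<star> gen i) = \<epsilon> * \<psi> y" if "i < 3" for y i
    unfolding \<psi>_def using \<epsilon> that by (rule sign_pattern_mult_gen)
  have \<sigma>_step: "\<sigma> (y \<star> gen i) = \<epsilon> * \<sigma> y" if "ball_class y \<sigma> = m" "i < 3" for y i
    using neighbour_spin[OF config _ that(2), of y] that(1) mS(2) by (simp add: \<epsilon>_def)
  have "\<sigma> x * \<epsilon> ^ word_length x \<in> {-1, 1}"
    using is_config_spin[OF config, of x] \<epsilon> by (auto simp: unit_power_parity)
  then have ground: "\<psi> \<in> GS J1 J2"
    unfolding \<psi>_def \<epsilon>_def by (rule sign_pattern_in_GS[OF mS])
  have centre: "\<sigma> x = \<psi> x"
    by (simp add: \<psi>_def sign_pattern_at_centre[OF \<epsilon>])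
  have leaf: "\<sigma> (x \<star> gen i) = \<psi> (x \<star> gen i)" if "i < 3" for i
    using \<sigma>_step[OF m_def[symmetric] that] \<psi>_step[OF that] centre by simp
  have leaf2: "\<sigma> (x \<star> gen i \<star> gen j) = \<psi> (x \<star> gen i \<star> gen j)" if "i < 3" "j < 3" for i j
    using \<sigma>_step[OF leaf_class[OF that(1)] that(2)] \<psi>_step[OF that(2)] leaf[OF that(1)] by simp
  have "\<sigma> y = \<psi> y" if "y \<in> ball2 x" for y
    using that by (rule mem_ball2_cases) (simp_all add: centre leaf leaf2)
  with ground show ?thesis unfolding improper_def by blast
qed

section \<open>The relative Hamiltonian as a sum of ball energies\<close>

lemma sum_nonzero_image_reindex:
  assumes "inj_on h D" "finite E" "E \<subseteq> D" "\<And>q. q \<in> D \<Longrightarrow> g (h q) \<noteq> 0 \<Longrightarrow> q \<in> E"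
  shows "(\<Sum>p\<in>{p \<in> h ` D. g p \<noteq> 0}. g p) = (\<Sum>q\<in>E. g (h q))"
proof -
  have "{p \<in> h ` D. g p \<noteq> 0} = h ` {q \<in> D. g (h q) \<noteq> 0}" by auto
  moreover have "inj_on h {q \<in> D. g (h q) \<noteq> 0}" using assms(1) by (rule inj_on_subset) auto
  ultimately have "(\<Sum>p\<in>{p \<in> h ` D. g p \<noteq> 0}. g p) = (\<Sum>q\<in>{q \<in> D. g (h q) \<noteq> 0}. g (h q))"
    by (simp add: sum.reindex)
  also have "\<dots> = (\<Sum>q\<in>E. g (h q))"
    using assms(2-4) by (intro sum.mono_neutral_left) auto
  finally show ?thesis .
qed

lemma adj_pairs_eq_image: "{(x, y). adj x y} = (\<lambda>(x, i). (x, x \<star> gen i)) ` (UNIV \<times> {..<3})"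
  by (auto simp: adj_def)

lemma dist2_pairs_eq_image:
  "{(x, y). gdist x y = 2} = (\<lambda>(m, i, j). (m \<star> gen i, m \<star> gen j)) ` (UNIV \<times> sibling_pairs)"
proof (intro equalityI subsetI)
  fix p assume "p \<in> {(x, y). gdist x y = 2}"
  then obtain m i j where "i < 3" "j < 3" "i \<noteq> j" "p = (m \<star> gen i, m \<star> gen j)"
    by (auto simp: gdist_eq_2_iff)
  then show "p \<in> (\<lambda>(m, i, j). (m \<star> gen i, m \<star> gen j)) ` (UNIV \<times> sibling_pairs)"
    by (auto simp: sibling_pairs_def intro!: image_eqI[of _ _ "(m, i, j)"])
qed (auto simp: sibling_pairs_def gdist_mult_gen_gen)

definition disagreement_centres :: "(G2 \<Rightarrow> int) \<Rightarrow> (G2 \<Rightarrow> int) \<Rightarrow> G2 set" where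
  "disagreement_centres \<sigma> \<tau> = {x. \<exists>u\<in>ball1 x. \<sigma> u \<noteq> \<tau> u}"

lemma finite_disagreement_centres:
  assumes "finite {x. \<sigma> x \<noteq> \<tau> x}"
  shows "finite (disagreement_centres \<sigma> \<tau>)"
proof -
  have "disagreement_centres \<sigma> \<tau> \<subseteq> (\<Union>u\<in>{x. \<sigma> x \<noteq> \<tau> x}. ball1 u)"
    by (auto simp: disagreement_centres_def ball1_def gdist_sym)
  moreover have "finite (ball1 u)" for u by (simp add: ball1_eq)
  ultimately show ?thesis using assms by (meson finite_UN_I finite_subset)
qed

lemma centre_in_disagreement_centres:
  "\<sigma> x \<noteq> \<tau> x \<or> (\<exists>i<3. \<sigma> (x \<star> gen i) \<noteq> \<tau> (x \<star> gen i)) \<Longrightarrow> x \<in> disagreement_centres \<sigma> \<tau>"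
  by (auto simp: disagreement_centres_def ball1_eq)

lemma sum_adj_pairs_eq:
  fixes \<sigma> \<tau> :: "G2 \<Rightarrow> int"
  assumes "finite {x. \<sigma> x \<noteq> \<tau> x}"
  shows "(\<Sum>p\<in>{(x, y). adj x y \<and> \<sigma> x * \<sigma> y \<noteq> \<tau> x * \<tau> y}.
            real_of_int (\<sigma> (fst p) * \<sigma> (snd p) - \<tau> (fst p) * \<tau> (snd p)))
       = (\<Sum>x\<in>disagreement_centres \<sigma> \<tau>. \<Sum>i<3.
            real_of_int (\<sigma> x * \<sigma> (x \<star> gen i) - \<tau> x * \<tau> (x \<star> gen i)))"
proof -
  let ?g = "\<lambda>p. real_of_int (\<sigma> (fst p) * \<sigma> (snd p) - \<tau> (fst p) * \<tau> (snd p))"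
  let ?h = "\<lambda>(x, i). (x, x \<star> gen i)"
  have "{(x, y). adj x y \<and> \<sigma> x * \<sigma> y \<noteq> \<tau> x * \<tau> y} = {p \<in> ?h ` (UNIV \<times> {..<3}). ?g p \<noteq> 0}"
    unfolding adj_pairs_eq_image[symmetric] by (auto simp del: of_int_diff of_int_mult)
  then have "(\<Sum>p\<in>{(x, y). adj x y \<and> \<sigma> x * \<sigma> y \<noteq> \<tau> x * \<tau> y}. ?g p)
      = (\<Sum>q\<in>disagreement_centres \<sigma> \<tau> \<times> {..<3}. ?g (?h q))"
    using finite_disagreement_centres[OF assms]
    by (simp only:) (intro sum_nonzero_image_reindex;
        auto simp: inj_on_def mult_gen_eq_iff simp del: of_int_diff of_int_mult
          intro!: centre_in_disagreement_centres)
  also have "\<dots> = (\<Sum>x\<in>disagreement_centres \<sigma> \<tau>. \<Sum>i<3. ?g (x, x \<star> gen i))"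
    by (simp only: sum.cartesian_product split_def fst_conv snd_conv)
  finally show ?thesis by (simp only: fst_conv snd_conv)
qed

lemma sum_dist2_pairs_eq:
  fixes \<sigma> \<tau> :: "G2 \<Rightarrow> int"
  assumes "finite {x. \<sigma> x \<noteq> \<tau> x}"
  shows "(\<Sum>p\<in>{(x, y). gdist x y = 2 \<and> \<sigma> x * \<sigma> y \<noteq> \<tau> x * \<tau> y}.
            real_of_int (\<sigma> (fst p) * \<sigma> (snd p) - \<tau> (fst p) * \<tau> (snd p)))
       = (\<Sum>x\<in>disagreement_centres \<sigma> \<tau>. \<Sum>(i, j)\<in>sibling_pairs.
            real_of_int (\<sigma> (x \<star> gen i) * \<sigma> (x \<star> gen j) - \<tau> (x \<star> gen i) * \<tau> (x \<star> gen j)))"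
proof -
  let ?g = "\<lambda>p. real_of_int (\<sigma> (fst p) * \<sigma> (snd p) - \<tau> (fst p) * \<tau> (snd p))"
  let ?h = "\<lambda>(m, i, j). (m \<star> gen i, m \<star> gen j)"
  have inj: "inj_on ?h (UNIV \<times> sibling_pairs)"
  proof (rule inj_onI)
    fix p q
    assume p: "p \<in> UNIV \<times> sibling_pairs" and q: "q \<in> UNIV \<times> sibling_pairs" and e: "?h p = ?h q"
    obtain m i j m' k l where pq: "p = (m, i, j)" "q = (m', k, l)" by (cases p, cases q) auto
    from p q have "i < 3" "j < 3" "k < 3" "l < 3" "i \<noteq> j" by (auto simp: pq sibling_pairs_def)
    with e show "p = q" using sibling_pair_inj[of i j k l m m'] by (simp add: pq)
  qed
  have "{(x, y). gdist x y = 2 \<and> \<sigma> x * \<sigma> y \<noteq> \<tau> x * \<tau> y}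
      = {p \<in> ?h ` (UNIV \<times> sibling_pairs). ?g p \<noteq> 0}"
    unfolding dist2_pairs_eq_image[symmetric] by (auto simp del: of_int_diff of_int_mult)
  then have "(\<Sum>p\<in>{(x, y). gdist x y = 2 \<and> \<sigma> x * \<sigma> y \<noteq> \<tau> x * \<tau> y}. ?g p)
      = (\<Sum>q\<in>disagreement_centres \<sigma> \<tau> \<times> sibling_pairs. ?g (?h q))"
    using finite_disagreement_centres[OF assms] finite_sibling_pairs
    by (simp only:) (intro sum_nonzero_image_reindex[OF inj];
        auto simp: sibling_pairs_def simp del: of_int_diff of_int_mult
          intro!: centre_in_disagreement_centres)
  also have "\<dots> = (\<Sum>x\<in>disagreement_centres \<sigma> \<tau>. \<Sum>(i, j)\<in>sibling_pairs. ?g (?h (x, i, j)))"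
    by (simp only: sum.cartesian_product split_def fst_conv snd_conv prod.collapse)
  finally show ?thesis by (simp only: split_def fst_conv snd_conv)
qed

lemma site_energy_diff:
  "site_energy J1 J2 \<sigma> x - site_energy J1 J2 \<tau> x
     = J1 / 2 * (\<Sum>i<3. real_of_int (\<sigma> x * \<sigma> (x \<star> gen i) - \<tau> x * \<tau> (x \<star> gen i)))
     + J2 / 2 * (\<Sum>(i, j)\<in>sibling_pairs.
         real_of_int (\<sigma> (x \<star> gen i) * \<sigma> (x \<star> gen j) - \<tau> (x \<star> gen i) * \<tau> (x \<star> gen j)))"
  by (simp add: site_energy_def sum_subtractf case_prod_beta algebra_simps)

text \<open>Each edge is seen from both of its endpoints and each pair at distance 2, in both
  orders, from its midpoint; hence the weights \<open>J\<^sub>1/2\<close> and \<open>J\<^sub>2/2\<close> in \<open>site_energy\<close>.\<close>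

lemma relH_eq_sum_site_energy:
  assumes "finite {x. \<sigma> x \<noteq> \<tau> x}"
  shows "relH J1 J2 \<sigma> \<tau>
    = (\<Sum>x\<in>disagreement_centres \<sigma> \<tau>. site_energy J1 J2 \<sigma> x - site_energy J1 J2 \<tau> x)"
  unfolding relH_def sum_adj_pairs_eq[OF assms] sum_dist2_pairs_eq[OF assms] site_energy_diff
  by (simp add: sum.distrib sum_distrib_left)

lemma energy_gap: "\<exists>\<delta>>0. \<forall>m\<in>{1, 2, 3, 4} - Sset J1 J2. Umin J1 J2 + \<delta> \<le> Uval J1 J2 m"
proof -
  define gaps where "gaps = (\<lambda>m. Uval J1 J2 m - Umin J1 J2) ` ({1, 2, 3, 4} - Sset J1 J2)"
  define \<delta> where "\<delta> = Min (insert 1 gaps)"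
  have fin: "finite (insert 1 gaps)" unfolding gaps_def by (intro finite.insertI finite_imageI) auto
  have "0 < d" if "d \<in> gaps" for d
  proof -
    from that obtain m where m: "m \<in> {1, 2, 3, 4} - Sset J1 J2" "d = Uval J1 J2 m - Umin J1 J2"
      unfolding gaps_def by (rule imageE)
    then have "Uval J1 J2 m \<noteq> Umin J1 J2" unfolding Sset_def by blast
    moreover have "Umin J1 J2 \<le> Uval J1 J2 m" using m(1) by (simp add: Umin_le_Uval)
    ultimately show ?thesis using m(2) by simp
  qed
  then have "0 < \<delta>" unfolding \<delta>_def using fin by (subst Min_gr_iff) simp_all
  moreover have "Umin J1 J2 + \<delta> \<le> Uval J1 J2 m" if "m \<in> {1, 2, 3, 4} - Sset J1 J2" for m
  proof -
    have "Uval J1 J2 m - Umin J1 J2 \<in> insert 1 gaps" using that unfolding gaps_def by blast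
    then have "\<delta> \<le> Uval J1 J2 m - Umin J1 J2" unfolding \<delta>_def using fin by (rule Min_le[rotated])
    then show ?thesis by simp
  qed
  ultimately show ?thesis by blast
qed

definition defects :: "real \<Rightarrow> real \<Rightarrow> (G2 \<Rightarrow> int) \<Rightarrow> G2 set" where
  "defects J1 J2 \<sigma> = {x. ball_class x \<sigma> \<notin> Sset J1 J2}"

lemma ball_class_cong: "(\<And>u. u \<in> ball1 x \<Longrightarrow> \<sigma> u = \<tau> u) \<Longrightarrow> ball_class x \<sigma> = ball_class x \<tau>"
proof -
  assume "\<And>u. u \<in> ball1 x \<Longrightarrow> \<sigma> u = \<tau> u"
  moreover have "x \<in> ball1 x" by (simp add: ball1_eq)
  ultimately have "{u \<in> ball1 x - {x}. \<sigma> u = \<sigma> x} = {u \<in> ball1 x - {x}. \<tau> u = \<tau> x}" by auto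
  then show ?thesis by (simp add: ball_class_def same_leaves_def)
qed

lemma defects_subset_disagreement_centres:
  assumes "\<tau> \<in> GS J1 J2"
  shows "defects J1 J2 \<sigma> \<subseteq> disagreement_centres \<sigma> \<tau>"
proof
  fix x assume x: "x \<in> defects J1 J2 \<sigma>"
  show "x \<in> disagreement_centres \<sigma> \<tau>"
  proof (rule ccontr)
    assume "x \<notin> disagreement_centres \<sigma> \<tau>"
    then have "ball_class x \<sigma> = ball_class x \<tau>"
      by (intro ball_class_cong) (auto simp: disagreement_centres_def)
    then show False using x ball_class_GS[OF assms, of x] by (simp add: defects_def)
  qed
qed

lemma relH_ge_defects:
  assumes \<tau>: "\<tau> \<in> GS J1 J2" and config: "is_config \<sigma>" and fin: "finite {x. \<sigma> x \<noteq> \<tau> x}"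
    and gap: "\<forall>m\<in>{1, 2, 3, 4} - Sset J1 J2. Umin J1 J2 + \<delta> \<le> Uval J1 J2 m"
  shows "\<delta> * card (defects J1 J2 \<sigma>) \<le> relH J1 J2 \<sigma> \<tau>"
proof -
  let ?F = "disagreement_centres \<sigma> \<tau>"
  let ?excess = "\<lambda>x. Uval J1 J2 (ball_class x \<sigma>) - Umin J1 J2"
  have "site_energy J1 J2 \<tau> x = Umin J1 J2" for x
    using \<tau> by (simp add: GS_def ground_state_def ball_energy_eq_site_energy[symmetric])
  then have "relH J1 J2 \<sigma> \<tau> = (\<Sum>x\<in>?F. ?excess x)"
    by (simp add: relH_eq_sum_site_energy[OF fin] site_energy_eq_Uval[OF config])
  also have "\<dots> \<ge> (\<Sum>x\<in>defects J1 J2 \<sigma>. ?excess x)"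
    using finite_disagreement_centres[OF fin] defects_subset_disagreement_centres[OF \<tau>]
      Umin_le_Uval[OF ball_class_range]
    by (intro sum_mono2) auto
  moreover have "(\<Sum>x\<in>defects J1 J2 \<sigma>. ?excess x) \<ge> (\<Sum>x\<in>defects J1 J2 \<sigma>. \<delta>)"
    using gap ball_class_range by (intro sum_mono) (force simp: defects_def)
  ultimately show ?thesis by (simp add: mult.commute)
qed

lemma finite_defects:
  "\<tau> \<in> GS J1 J2 \<Longrightarrow> finite {x. \<sigma> x \<noteq> \<tau> x} \<Longrightarrow> finite (defects J1 J2 \<sigma>)"
  by (rule finite_subset[OF defects_subset_disagreement_centres finite_disagreement_centres])

lemma boundary_subset_defect_neighbourhood:
  assumes "Sset J1 J2 \<subseteq> {1, 3}" "is_config \<sigma>"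
  shows "boundary J1 J2 \<sigma> \<subseteq> (\<Union>y\<in>defects J1 J2 \<sigma>. {z. gdist y z \<le> 3})"
proof
  fix z assume "z \<in> boundary J1 J2 \<sigma>"
  then obtain x where x: "improper J1 J2 \<sigma> x" "gdist x z \<le> 2"
    by (auto simp: boundary_def ball2_def)
  then obtain y where y: "y \<in> ball1 x" "y \<in> defects J1 J2 \<sigma>"
    using not_improper_if_ball_classes_in_Sset[OF assms] by (auto simp: defects_def)
  have "gdist y z \<le> gdist y x + gdist x z" by (rule gdist_triangle)
  also have "\<dots> \<le> 3" using x(2) y(1) by (simp add: ball1_def gdist_sym)
  finally show "z \<in> (\<Union>y\<in>defects J1 J2 \<sigma>. {z. gdist y z \<le> 3})" using y(2) by blast
qed

lemma boundary_size_le_defects: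
  assumes "Sset J1 J2 \<subseteq> {1, 3}" "is_config \<sigma>" "finite (defects J1 J2 \<sigma>)"
  shows "boundary_size J1 J2 \<sigma> \<le> card {w. word_length w \<le> 3} * card (defects J1 J2 \<sigma>)"
proof -
  let ?N = "\<Union>y\<in>defects J1 J2 \<sigma>. {z. gdist y z \<le> 3}"
  have fin: "finite ?N" using assms(3) finite_gdist_ball by blast
  have "{x. ball1 x \<subseteq> boundary J1 J2 \<sigma>} \<subseteq> ?N"
    using boundary_subset_defect_neighbourhood[OF assms(1,2)] by (auto simp: ball1_eq)
  then have "boundary_size J1 J2 \<sigma> \<le> card ?N"
    unfolding boundary_size_def using fin by (rule card_mono[rotated])
  also have "\<dots> \<le> (\<Sum>y\<in>defects J1 J2 \<sigma>. card {z. gdist y z \<le> 3})"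
    using assms(3) by (rule card_UN_le)
  also have "\<dots> = card {w. word_length w \<le> 3} * card (defects J1 J2 \<sigma>)"
    by (simp add: card_gdist_ball)
  finally show ?thesis .
qed

lemma peierls_inequality:
  assumes S: "Sset J1 J2 \<subseteq> {1, 3}"
  shows "\<exists>lam>0. \<forall>\<tau>\<in>GS J1 J2. \<forall>\<sigma>. is_config \<sigma> \<and> finite {x. \<sigma> x \<noteq> \<tau> x} \<longrightarrow>
           relH J1 J2 \<sigma> \<tau> \<ge> lam * real (boundary_size J1 J2 \<sigma>)"
proof -
  obtain \<delta> where \<delta>: "\<delta> > 0" "\<forall>m\<in>{1, 2, 3, 4} - Sset J1 J2. Umin J1 J2 + \<delta> \<le> Uval J1 J2 m"
    using energy_gap by blast
  define K where "K = card {w. word_length w \<le> (3::nat)}"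
  have "g2_one \<in> {w. word_length w \<le> 3}" by simp
  then have K: "K > 0" unfolding K_def using finite_word_length_le card_gt_0_iff by blast
  have "\<delta> / K * real (boundary_size J1 J2 \<sigma>) \<le> relH J1 J2 \<sigma> \<tau>"
    if \<tau>: "\<tau> \<in> GS J1 J2" and config: "is_config \<sigma>" and fin: "finite {x. \<sigma> x \<noteq> \<tau> x}" for \<tau> \<sigma>
  proof -
    have "real (boundary_size J1 J2 \<sigma>) \<le> K * real (card (defects J1 J2 \<sigma>))"
      using boundary_size_le_defects[OF S config finite_defects[OF \<tau> fin]]
      unfolding K_def by (metis of_nat_le_iff of_nat_mult)
    then have "\<delta> / K * real (boundary_size J1 J2 \<sigma>) \<le> \<delta> * card (defects J1 J2 \<sigma>)"
      using \<delta>(1) K by (simp add: field_simps mult_left_mono)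
    also have "\<dots> \<le> relH J1 J2 \<sigma> \<tau>" by (rule relH_ge_defects[OF \<tau> config fin \<delta>(2)])
    finally show ?thesis .
  qed
  moreover have "\<delta> / K > 0" using \<delta>(1) K by simp
  ultimately show ?thesis by blast
qed

section \<open>Uniqueness of compatible extensions excludes the classes \<open>\<C>\<^sub>2\<close> and \<open>\<C>\<^sub>4\<close>\<close>

lemma ball1_inter_ball1_mult_gen:
  assumes "i < 3"
  shows "ball1 x \<inter> ball1 (x \<star> gen i) = {x, x \<star> gen i}"
proof (intro equalityI subsetI)
  fix u assume u: "u \<in> ball1 x \<inter> ball1 (x \<star> gen i)"
  show "u \<in> {x, x \<star> gen i}"
  proof (cases "u = x")
    case False
    then obtain j where "j < 3" "u = x \<star> gen j" using u by (auto simp: ball1_eq)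
    moreover have "gdist (x \<star> gen i) u \<le> 1" using u by (simp add: ball1_def)
    ultimately show ?thesis using assms by (auto simp: gdist_mult_gen_gen split: if_splits)
  qed simp
next
  fix u assume "u \<in> {x, x \<star> gen i}"
  then show "u \<in> ball1 x \<inter> ball1 (x \<star> gen i)"
    using assms by (auto simp: ball1_def gdist_mult_gen gdist_sym[of "x \<star> gen i" x])
qed

lemma nbr_balls_mult_gen:
  assumes "i < 3"
  shows "nbr_balls (ball1 x) (ball1 (x \<star> gen i))"
proof -
  define j where "j = (if i = 0 then 1 else 0 :: nat)"
  have j: "j < 3" "j \<noteq> i" by (simp_all add: j_def)
  have "x \<star> gen j \<in> ball1 x" using j(1) by (simp add: ball1_eq)
  moreover have "x \<star> gen j \<notin> {x, x \<star> gen i}"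
    using j mult_gen_neq[OF j(1), of x] mult_gen_eq_iff[OF j(1) assms, of x] by auto
  ultimately have "x \<star> gen j \<notin> ball1 (x \<star> gen i)"
    using ball1_inter_ball1_mult_gen[OF assms, of x] by blast
  moreover note \<open>x \<star> gen j \<in> ball1 x\<close>
  ultimately have "ball1 x \<noteq> ball1 (x \<star> gen i)" by blast
  moreover have "x \<in> ball1 x \<inter> ball1 (x \<star> gen i)" "x \<star> gen i \<in> ball1 x \<inter> ball1 (x \<star> gen i)"
    by (simp_all add: ball1_inter_ball1_mult_gen[OF assms])
  ultimately show ?thesis
    unfolding nbr_balls_def using adj_mult_gen[OF assms] by blast
qed

lemma compatible_mult_gen:
  assumes "i < 3" "f x = g x" "f (x \<star> gen i) = g (x \<star> gen i)"
  shows "compatible (ball1 x) (ball1 (x \<star> gen i)) f g"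
  using assms ball1_inter_ball1_mult_gen[OF assms(1), of x] by (auto simp: compatible_def)

definition star_config :: "G2 \<Rightarrow> int \<Rightarrow> int \<Rightarrow> int \<Rightarrow> int \<Rightarrow> G2 \<Rightarrow> int" where
  "star_config x c v0 v1 v2 u =
     (if u = x then c else if u = x \<star> gen 0 then v0 else if u = x \<star> gen 1 then v1
      else if u = x \<star> gen 2 then v2 else 0)"

lemma star_config_values:
  "star_config x c v0 v1 v2 x = c"
  "star_config x c v0 v1 v2 (x \<star> gen 0) = v0"
  "star_config x c v0 v1 v2 (x \<star> gen 1) = v1"
  "star_config x c v0 v1 v2 (x \<star> gen 2) = v2"
  by (simp_all add: star_config_def mult_gen_neq mult_gen_eq_iff)

lemma star_config_in_confs_on:
  assumes "c \<in> {-1, 1}" "v0 \<in> {-1, 1}" "v1 \<in> {-1, 1}" "v2 \<in> {-1, 1}"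
  shows "star_config x c v0 v1 v2 \<in> confs_on (ball1 x)"
  using assms by (auto simp: confs_on_def star_config_def ball1_eq lessThan_3)

lemma same_leaves_star_config:
  "same_leaves x (star_config x c v0 v1 v2) = of_bool (v0 = c) + of_bool (v1 = c) + of_bool (v2 = c)"
  by (simp only: same_leaves_eq card_less_3 star_config_values)

lemma ball_class_star_config:
  "a \<in> {-1, 1} \<Longrightarrow> ball_class x (star_config x 1 a 1 (-1)) = (if a = 1 then 2 else 4)"
  by (auto simp: ball_class_def same_leaves_star_config)

lemma compatible_star_extension:
  assumes "a \<in> {-1, 1}" "s \<in> {-1, 1}"
  shows "star_config (x \<star> gen 0) a 1 s (- s) \<in> confs_on (ball1 (x \<star> gen 0))"
    and "ball_class (x \<star> gen 0) (star_config (x \<star> gen 0) a 1 s (- s))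
           = ball_class x (star_config x 1 a 1 (-1))"
    and "compatible (ball1 x) (ball1 (x \<star> gen 0))
           (star_config x 1 a 1 (-1)) (star_config (x \<star> gen 0) a 1 s (- s))"
proof -
  show "star_config (x \<star> gen 0) a 1 s (- s) \<in> confs_on (ball1 (x \<star> gen 0))"
    using assms by (intro star_config_in_confs_on) auto
  show "ball_class (x \<star> gen 0) (star_config (x \<star> gen 0) a 1 s (- s))
      = ball_class x (star_config x 1 a 1 (-1))"
    using assms by (auto simp: ball_class_def same_leaves_star_config)
  show "compatible (ball1 x) (ball1 (x \<star> gen 0))
      (star_config x 1 a 1 (-1)) (star_config (x \<star> gen 0) a 1 s (- s))"
    using star_config_values[of "x \<star> gen 0" a 1 s "- s"] star_config_values[of x 1 a 1 "- 1"]
    by (intro compatible_mult_gen) simp_all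
qed

lemma Sset_subset_1_3_if_unique_extension:
  assumes unique: "\<forall>x. \<forall>f \<in> confs_on (ball1 x). ball_class x f \<in> Sset J1 J2 \<longrightarrow>
             (\<forall>y. nbr_balls (ball1 x) (ball1 y) \<longrightarrow>
                (\<exists>!g. g \<in> confs_on (ball1 y) \<and> ball_class y g \<in> Sset J1 J2 \<and>
                      compatible (ball1 x) (ball1 y) f g))"
  shows "Sset J1 J2 \<subseteq> {1, 3}"
proof -
  have "(if a = 1 then 2 else 4) \<notin> Sset J1 J2" if a: "a \<in> {-1, 1}" for a :: int and x :: G2
  proof
    assume "(if a = 1 then 2 else 4) \<in> Sset J1 J2"
    then have f: "ball_class x (star_config x 1 a 1 (-1)) \<in> Sset J1 J2"
      by (simp add: ball_class_star_config[OF a])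
    define g where "g s = star_config (x \<star> gen 0) a 1 s (- s)" for s
    have "star_config x 1 a 1 (-1) \<in> confs_on (ball1 x)"
      using a by (intro star_config_in_confs_on) auto
    with f have "\<exists>!g. g \<in> confs_on (ball1 (x \<star> gen 0)) \<and> ball_class (x \<star> gen 0) g \<in> Sset J1 J2
        \<and> compatible (ball1 x) (ball1 (x \<star> gen 0)) (star_config x 1 a 1 (-1)) g"
      using unique nbr_balls_mult_gen[of 0 x] by simp
    moreover have "g s \<in> confs_on (ball1 (x \<star> gen 0)) \<and> ball_class (x \<star> gen 0) (g s) \<in> Sset J1 J2
        \<and> compatible (ball1 x) (ball1 (x \<star> gen 0)) (star_config x 1 a 1 (-1)) (g s)"
      if "s \<in> {-1, 1}" for s
      using compatible_star_extension[OF a that] f by (simp add: g_def)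
    ultimately have "g 1 = g (-1)" by blast
    then have "g 1 (x \<star> gen 0 \<star> gen 2) = g (-1) (x \<star> gen 0 \<star> gen 2)" by simp
    then show False by (simp add: g_def star_config_values)
  qed
  from this[of 1] this[of "-1"] show ?thesis by (auto simp: Sset_def)
qed

theorem theorem6p3:
  fixes J1 J2 :: real
  assumes "\<forall>x. \<forall>f \<in> confs_on (ball1 x). ball_class x f \<in> Sset J1 J2 \<longrightarrow>
             (\<forall>y. nbr_balls (ball1 x) (ball1 y) \<longrightarrow>
                (\<exists>!g. g \<in> confs_on (ball1 y) \<and> ball_class y g \<in> Sset J1 J2 \<and>
                      compatible (ball1 x) (ball1 y) f g))"
  shows "peierls J1 J2"
proof -
  have S: "Sset J1 J2 \<subseteq> {1, 3}" by (rule Sset_subset_1_3_if_unique_extension[OF assms])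
  show ?thesis
    unfolding peierls_def using finite_GS[OF S] period_le2_GS[OF S] peierls_inequality[OF S]
    by blast
qed

end
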